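(* Let $C$ be a nondegenerate correlator on the smooth real vector bundle $E\to M$. Then $C$ induces a canonical metric $(\cdot,\cdot)_C$ on $E$ and a connection $\nabla^C$ on $E$ compatible with this metric, described as follows: if $\mathcal O\subset M$ is a coordinate neighborhood with coordinates $(x^i)$ and $\underline e:\underline{\mathbb R}^r_{\mathcal O}\to E|_{\mathcal O}$ is a $(\cdot,\cdot)_C$-orthonormal frame, then in this frame $\nabla^C=d+\sum_i\Gamma_i(\underline e)dx^i$, where the skew-symmetric $r\times r$ matrices are $\Gamma_i(\underline e)_y=-\partial_{x^i}T(\underline e)_{x,y}|_{x=y}$. This is well defined: for any smooth $g:\mathcal O\to O(r)$ one has $\Gamma(\underline e\cdot g)=g^{-1}dg+g^{-1}\Gamma(\underline e)g$, where $\Gamma(\underline e)=\sum_i\Gamma_i(\underline e)dx^i$, so the connections defined via different orthonormal frames coincide.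
   Context: A correlator on $E$ is a smooth section $C$ of $E\boxtimes E$ over $M\times M$, identified with bilinear maps $C_{x,y}:E_x^*\times E_y^*\to\mathbb R$, which is symmetric ($C_{x,y}(u^*,v^* )=C_{y,x}(v^*,u^* )$) with each $C_{x,x}$ nonnegative definite; nondegenerate means each $C_{x,x}$ is positive definite. The metric $(\cdot,\cdot)_C$ on $E$ is the dual of the inner product $C_{x,x}$ on $E_x^*$. The tunneling map $T_{x,y}\in\mathrm{Hom}(E_y,E_x)$ is defined by $\langle u^*,T_{x,y}v\rangle=C_{x,y}(u^*,v^\flat)$, $v^\flat$ the $(\cdot,\cdot)_C$-dual of $v$. For an orthonormal frame $\underline e$, $T(\underline e)_{x,y}:=\underline e(x)^{-1}T_{x,y}\underline e(y)\in\mathrm{End}(\mathbb R^r)$. The expression $d+\Gamma$ acts on $\mathbb R^r$-valued functions (coordinates of sections in the frame) by $s\mapsto ds+\Gamma s$. *)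

theory Defs
  imports "HOL-Analysis.Analysis"
begin

(* Local-coordinate setting: a coordinate neighbourhood U (open in R^n, coordinates indexed by 'n),
   E|_O trivialised as U x R^r (fibre index type 'r). *)

fun Ck_on :: "nat \<Rightarrow> 'a set \<Rightarrow> ('a::euclidean_space \<Rightarrow> 'b::real_normed_vector) \<Rightarrow> bool" where
  "Ck_on 0 S f = continuous_on S f"
| "Ck_on (Suc k) S f = (f differentiable_on S \<and>
      (\<forall>i\<in>Basis. Ck_on k S (\<lambda>x. frechet_derivative f (at x) i)))"

definition smooth_on :: "'a set \<Rightarrow> ('a::euclidean_space \<Rightarrow> 'b::real_normed_vector) \<Rightarrow> bool" where
  "smooth_on S f \<longleftrightarrow> (\<forall>k. Ck_on k S f)"

definition pderiv_coord :: "'n \<Rightarrow> (real^'n \<Rightarrow> 'b::real_normed_vector) \<Rightarrow> real^'n \<Rightarrow> 'b" where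
  "pderiv_coord i f y = vector_derivative (\<lambda>t. f (y + t *\<^sub>R axis i 1)) (at 0)"

text \<open>A correlator on E|_O, in the trivialisation: Cm x y is the matrix of the bilinear map
  C_{x,y} : E_x^* x E_y^* -> R, i.e. C_{x,y}(a,b) = a \<bullet> (Cm x y *v b).\<close>
definition correlator_on :: "(real^'n) set \<Rightarrow> (real^'n \<Rightarrow> real^'n \<Rightarrow> real^'r^'r) \<Rightarrow> bool" where
  "correlator_on U Cm \<longleftrightarrow>
     smooth_on (U \<times> U) (\<lambda>(x,y). Cm x y) \<and>
     (\<forall>x\<in>U. \<forall>y\<in>U. Cm y x = transpose (Cm x y)) \<and>
     (\<forall>x\<in>U. \<forall>u. 0 \<le> u \<bullet> (Cm x x *v u))"

definition nondegenerate_on :: "(real^'n) set \<Rightarrow> (real^'n \<Rightarrow> real^'n \<Rightarrow> real^'r^'r) \<Rightarrow> bool" where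
  "nondegenerate_on U Cm \<longleftrightarrow> (\<forall>x\<in>U. \<forall>u. u \<noteq> 0 \<longrightarrow> 0 < u \<bullet> (Cm x x *v u))"

text \<open>Matrix of the metric (.,.)_C on E_x: dual of the inner product C_{x,x} on E_x^*.\<close>
definition metricC :: "(real^'n \<Rightarrow> real^'n \<Rightarrow> real^'r^'r) \<Rightarrow> real^'n \<Rightarrow> real^'r^'r" where
  "metricC Cm x = matrix_inv (Cm x x)"

definition orthonormal_frame_on ::
  "(real^'n) set \<Rightarrow> (real^'n \<Rightarrow> real^'n \<Rightarrow> real^'r^'r) \<Rightarrow> (real^'n \<Rightarrow> real^'r^'r) \<Rightarrow> bool" where
  "orthonormal_frame_on U Cm e \<longleftrightarrow> smooth_on U e \<and>
     (\<forall>x\<in>U. invertible (e x) \<and> transpose (e x) ** metricC Cm x ** e x = mat 1)"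

text \<open>Tunneling map T_{x,y} : E_y -> E_x, <u*, T v> = C_{x,y}(u*, v^flat).\<close>
definition tunneling :: "(real^'n \<Rightarrow> real^'n \<Rightarrow> real^'r^'r) \<Rightarrow> real^'n \<Rightarrow> real^'n \<Rightarrow> real^'r^'r" where
  "tunneling Cm x y = Cm x y ** metricC Cm y"

definition tunneling_frame ::
  "(real^'n \<Rightarrow> real^'n \<Rightarrow> real^'r^'r) \<Rightarrow> (real^'n \<Rightarrow> real^'r^'r) \<Rightarrow> real^'n \<Rightarrow> real^'n \<Rightarrow> real^'r^'r" where
  "tunneling_frame Cm e x y = matrix_inv (e x) ** tunneling Cm x y ** e y"

definition Gamma ::
  "(real^'n \<Rightarrow> real^'n \<Rightarrow> real^'r^'r) \<Rightarrow> (real^'n \<Rightarrow> real^'r^'r) \<Rightarrow> 'n \<Rightarrow> real^'n \<Rightarrow> real^'r^'r" where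
  "Gamma Cm e i y = - pderiv_coord i (\<lambda>x. tunneling_frame Cm e x y) y"

definition orthogonal_matrix_valued :: "(real^'n) set \<Rightarrow> (real^'n \<Rightarrow> real^'r^'r) \<Rightarrow> bool" where
  "orthogonal_matrix_valued U g \<longleftrightarrow> (\<forall>x\<in>U. transpose (g x) ** g x = mat 1)"

end

theory Submission
  imports Defs
begin

text \<open>
  In an orthonormal frame e one has e(x)^-1 = e(x)^T (.,.)_C, so the tunneling matrix becomes
  T(e)_{x,y} = e(x)^-1 C_{x,y} e(y)^-T. It is symmetric, T(e)_{y,x} = T(e)_{x,y}^T, and equals the
  identity on the diagonal. Differentiating T(e)_{x,x} = 1 along the diagonal, and using the symmetry
  to identify the derivative in the second slot with the transpose of the derivative in the first,
  shows that the first-slot derivative at x = y is skew: Gamma(e) is skew, which is metric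
  compatibility of d + Gamma(e) in orthonormal coordinates. For an O(r)-valued gauge g one has
  T(e g)_{x,y} = g(x)^T T(e)_{x,y} g(y); differentiating in x at x = y and using T(e)_{y,y} = 1 and
  (g^T g)' = 0 gives the transformation law. The only analytic input beyond the product rule is the
  differentiability of matrix inversion, which follows from Cramer's rule.
\<close>

section \<open>Matrix products and inverses\<close>

lemma bounded_bilinear_matrix_mult:
  "bounded_bilinear ((**) :: real^'n^'m \<Rightarrow> real^'k^'n \<Rightarrow> real^'k^'m)"
  unfolding bilinear_conv_bounded_bilinear[symmetric] bilinear_def
  by (auto intro!: linearI simp: matrix_add_ldistrib matrix_scalar_ac scalar_matrix_assoc)
     (vector matrix_matrix_mult_def sum.distrib[symmetric] field_simps)

interpretation matrix_mult: bounded_bilinear "(**) :: real^'n^'m \<Rightarrow> real^'k^'n \<Rightarrow> real^'k^'m"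
  by (rule bounded_bilinear_matrix_mult)

lemma bounded_linear_transpose: "bounded_linear (transpose :: real^'n^'m \<Rightarrow> real^'m^'n)"
  unfolding linear_conv_bounded_linear[symmetric]
  by (auto intro!: linearI simp: transpose_def vec_eq_iff)

lemma differentiable_matrix_mult:
  fixes f :: "'a::real_normed_vector \<Rightarrow> real^'n^'m" and g :: "'a \<Rightarrow> real^'k^'n"
  assumes "f differentiable (at x within S)" "g differentiable (at x within S)"
  shows "(\<lambda>x. f x ** g x) differentiable (at x within S)"
  using assms unfolding differentiable_def by (blast intro: matrix_mult.FDERIV)

lemma matrix_inv_right:
  assumes "invertible (M :: real^'r^'r)"
  shows "M ** matrix_inv M = mat 1"
  using someI_ex[OF assms[unfolded invertible_def]] unfolding matrix_inv_def by auto

lemma matrix_inv_left: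
  assumes "invertible (M :: real^'r^'r)"
  shows "matrix_inv M ** M = mat 1"
  using someI_ex[OF assms[unfolded invertible_def]] unfolding matrix_inv_def by auto

lemma matrix_inv_unique_left:
  assumes "(B :: real^'r^'r) ** M = mat 1"
  shows "matrix_inv M = B"
proof -
  have "invertible M"
    using assms invertible_left_inverse by blast
  then have "B = B ** (M ** matrix_inv M)"
    by (simp add: matrix_inv_right)
  also have "\<dots> = matrix_inv M"
    by (simp add: matrix_mul_assoc assms)
  finally show ?thesis ..
qed

definition adjugate :: "real^'r^'r \<Rightarrow> real^'r^'r" where
  "adjugate M = (\<chi> k j. det (\<chi> a l. if l = k then axis j 1 $ a else M $ a $ l))"

lemma matrix_inv_eq_adjugate:
  assumes "invertible (M :: real^'r^'r)"
  shows "matrix_inv M = inverse (det M) *\<^sub>R adjugate M"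
proof -
  have det: "det M \<noteq> 0"
    using assms invertible_det_nz by blast
  have "matrix_inv M $ k $ j = adjugate M $ k $ j / det M" for k j
  proof -
    define x where "x = (\<chi> a. matrix_inv M $ a $ j)"
    have "(M *v x) $ a = (M ** matrix_inv M) $ a $ j" for a
      by (simp add: x_def matrix_vector_mult_def matrix_matrix_mult_def)
    then have "M *v x = axis j 1"
      by (simp add: matrix_inv_right[OF assms] vec_eq_iff mat_def axis_def)
    then have "x = (\<chi> k. adjugate M $ k $ j / det M)"
      unfolding cramer[OF det] adjugate_def by simp
    then show ?thesis
      by (simp add: x_def vec_eq_iff)
  qed
  then show ?thesis
    by (simp add: vec_eq_iff field_simps)
qed

lemma real_polynomial_function_det:
  fixes Q :: "'a::real_normed_vector \<Rightarrow> real^'r^'r"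
  assumes "\<And>a l. real_polynomial_function (\<lambda>x. Q x $ a $ l)"
  shows "real_polynomial_function (\<lambda>x. det (Q x))"
  unfolding det_def
  by (intro real_polynomial_function_sum real_polynomial_function.intros(2,4)
        real_polynomial_function_prod assms) auto

lemma real_polynomial_function_matrix_entry:
  "real_polynomial_function (\<lambda>M :: real^'n^'m. M $ a $ l)"
  by (intro real_polynomial_function.intros(1) bounded_linear_compose[OF bounded_linear_vec_nth]
      bounded_linear_vec_nth)

lemma polynomial_function_adjugate: "polynomial_function (adjugate :: real^'r^'r \<Rightarrow> _)"
  unfolding polynomial_function_iff_Basis_inner
proof
  fix b :: "real^'r^'r"
  assume "b \<in> Basis"
  then obtain k j where b: "b = axis k (axis j 1)"
    by (auto simp: Basis_vec_def)
  have "real_polynomial_function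
      (\<lambda>M :: real^'r^'r. (\<chi> a l. if l = k then axis j 1 $ a else M $ a $ l) $ a $ l)" for a l
    by (cases "l = k") (auto intro: real_polynomial_function_matrix_entry)
  then have "real_polynomial_function
      (\<lambda>M :: real^'r^'r. det (\<chi> a l. if l = k then axis j 1 $ a else M $ a $ l))"
    by (rule real_polynomial_function_det)
  then show "real_polynomial_function (\<lambda>M. adjugate M \<bullet> b)"
    by (simp add: b inner_axis adjugate_def)
qed

lemma differentiable_matrix_inv:
  assumes "invertible (M :: real^'r^'r)"
  shows "matrix_inv differentiable (at M)"
proof -
  define S where "S = {N :: real^'r^'r. det N \<noteq> 0}"
  have det_poly: "real_polynomial_function (det :: real^'r^'r \<Rightarrow> real)"
    using real_polynomial_function_det[of "\<lambda>N. N", OF real_polynomial_function_matrix_entry] by simp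
  have "open S"
    unfolding S_def
    using differentiable_imp_continuous_on[OF differentiable_on_real_polynomial_function[OF det_poly]]
    by (intro open_Collect_neq) (auto intro: continuous_on_const)
  have "M \<in> S"
    using assms invertible_det_nz S_def by blast
  have "(\<lambda>N. inverse (det N) *\<^sub>R adjugate N) differentiable (at M)"
    using \<open>M \<in> S\<close> S_def
    by (intro differentiable_scaleR differentiable_inverse polynomial_function_adjugate
        differentiable_at_polynomial_function differentiable_at_real_polynomial_function det_poly) auto
  then obtain D where D: "((\<lambda>N. inverse (det N) *\<^sub>R adjugate N) has_derivative D) (at M)"
    unfolding differentiable_def by blast
  have "(matrix_inv has_derivative D) (at M)"
    by (rule has_derivative_transform_within_open[OF D \<open>open S\<close> \<open>M \<in> S\<close>])
       (simp add: S_def invertible_det_nz matrix_inv_eq_adjugate)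
  then show ?thesis
    by (rule differentiableI)
qed

section \<open>Smooth functions\<close>

lemma Ck_on_Suc_imp_Ck_on: "Ck_on (Suc k) S f \<Longrightarrow> Ck_on k S f"
  by (induction k arbitrary: f) (auto intro: differentiable_imp_continuous_on)

lemma Ck_on_Suc_has_derivative:
  assumes "open S" "Ck_on (Suc k) S f" "x \<in> S"
  shows "(f has_derivative frechet_derivative f (at x)) (at x)"
proof -
  have "f differentiable_on S"
    using assms(2) by simp
  then have "f differentiable (at x)"
    using assms(1,3) differentiable_on_eq_differentiable_at by blast
  then show ?thesis
    using frechet_derivative_works by blast
qed

lemma Ck_on_cong:
  assumes "open S" "\<And>x. x \<in> S \<Longrightarrow> f x = g x" "Ck_on k S f"
  shows "Ck_on k S g"
  using assms(2,3)
proof (induction k arbitrary: f g)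
  case 0
  then show ?case
    using continuous_on_cong by (metis Ck_on.simps(1))
next
  case (Suc k)
  have "(g has_derivative frechet_derivative f (at x)) (at x)" if "x \<in> S" for x
    using has_derivative_transform_within_open[OF Ck_on_Suc_has_derivative[OF assms(1) Suc.prems(2) that]
        assms(1) that] Suc.prems(1) by blast
  then have "g differentiable (at x)" and deriv_eq: "frechet_derivative g (at x) = frechet_derivative f (at x)"
    if "x \<in> S" for x
    using that frechet_derivative_at differentiableI by metis+
  then have "g differentiable_on S"
    using differentiable_on_eq_differentiable_at[OF assms(1)] by blast
  moreover have "Ck_on k S (\<lambda>x. frechet_derivative g (at x) i)" if "i \<in> Basis" for i
    using Suc.IH[of "\<lambda>x. frechet_derivative f (at x) i"] Suc.prems(2) that deriv_eq by simp
  ultimately show ?case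
    by simp
qed

lemma Ck_on_SucI:
  assumes "open S"
    and "\<And>x. x \<in> S \<Longrightarrow> (f has_derivative f' x) (at x)"
    and "\<And>i. i \<in> Basis \<Longrightarrow> Ck_on k S (\<lambda>x. f' x i)"
  shows "Ck_on (Suc k) S f"
proof -
  have "frechet_derivative f (at x) = f' x" if "x \<in> S" for x
    using frechet_derivative_at[OF assms(2)[OF that]] by simp
  then have "Ck_on k S (\<lambda>x. frechet_derivative f (at x) i)" if "i \<in> Basis" for i
    using Ck_on_cong[OF assms(1) _ assms(3)[OF that]] by simp
  moreover have "f differentiable_on S"
    using assms(1,2) differentiable_on_eq_differentiable_at differentiableI by blast
  ultimately show ?thesis
    by simp
qed

lemma Ck_on_add:
  fixes f g :: "'a::euclidean_space \<Rightarrow> 'b::real_normed_vector"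
  assumes "open S"
  shows "Ck_on k S f \<Longrightarrow> Ck_on k S g \<Longrightarrow> Ck_on k S (\<lambda>x. f x + g x)"
proof (induction k arbitrary: f g)
  case 0
  then show ?case
    by (simp add: continuous_on_add)
next
  case (Suc k)
  show ?case
  proof (rule Ck_on_SucI[OF assms])
    show "((\<lambda>x. f x + g x) has_derivative
        (\<lambda>h. frechet_derivative f (at x) h + frechet_derivative g (at x) h)) (at x)" if "x \<in> S" for x
      using Ck_on_Suc_has_derivative[OF assms Suc.prems(1) that]
        Ck_on_Suc_has_derivative[OF assms Suc.prems(2) that]
      by (rule has_derivative_add)
    show "Ck_on k S (\<lambda>x. frechet_derivative f (at x) i + frechet_derivative g (at x) i)"
      if "i \<in> Basis" for i
      using Suc that by simp
  qed
qed

lemma Ck_on_bilinear: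
  fixes f :: "'a::euclidean_space \<Rightarrow> 'b::real_normed_vector"
    and g :: "'a \<Rightarrow> 'c::real_normed_vector"
  assumes P: "bounded_bilinear (P :: 'b \<Rightarrow> 'c \<Rightarrow> 'd::real_normed_vector)" and "open S"
  shows "Ck_on k S f \<Longrightarrow> Ck_on k S g \<Longrightarrow> Ck_on k S (\<lambda>x. P (f x) (g x))"
proof (induction k arbitrary: f g)
  case 0
  then show ?case
    using bounded_bilinear.continuous_on[OF P] by simp
next
  case (Suc k)
  let ?f' = "\<lambda>x. frechet_derivative f (at x)" and ?g' = "\<lambda>x. frechet_derivative g (at x)"
  show ?case
  proof (rule Ck_on_SucI[OF \<open>open S\<close>])
    show "((\<lambda>x. P (f x) (g x)) has_derivative (\<lambda>h. P (f x) (?g' x h) + P (?f' x h) (g x))) (at x)"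
      if "x \<in> S" for x
      using Ck_on_Suc_has_derivative[OF \<open>open S\<close> Suc.prems(1) that]
        Ck_on_Suc_has_derivative[OF \<open>open S\<close> Suc.prems(2) that]
      by (rule bounded_bilinear.FDERIV[OF P])
    show "Ck_on k S (\<lambda>x. P (f x) (?g' x i) + P (?f' x i) (g x))" if "i \<in> Basis" for i
      using Suc that by (intro Ck_on_add[OF \<open>open S\<close>] Suc.IH) (auto intro: Ck_on_Suc_imp_Ck_on)
  qed
qed

lemma smooth_on_bilinear:
  assumes "bounded_bilinear P" "open S" "smooth_on S f" "smooth_on S g"
  shows "smooth_on S (\<lambda>x. P (f x) (g x))"
  using assms Ck_on_bilinear unfolding smooth_on_def by blast

lemma smooth_on_imp_differentiable:
  assumes "open S" "smooth_on S f" "x \<in> S"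
  shows "f differentiable (at x)"
  using assms Ck_on_Suc_has_derivative differentiableI unfolding smooth_on_def by blast

section \<open>Partial derivatives\<close>

lemma pderiv_coord_at:
  assumes "(F has_derivative F') (at y)"
  shows "pderiv_coord i F y = F' (axis i 1)"
proof -
  have "((\<lambda>t. y + t *\<^sub>R axis i 1) has_derivative (\<lambda>t. t *\<^sub>R axis i 1)) (at 0)"
    by (auto intro!: derivative_eq_intros)
  moreover have "(F has_derivative F') (at ((\<lambda>t. y + t *\<^sub>R axis i 1) 0))"
    using assms by simp
  ultimately have "((\<lambda>t. F (y + t *\<^sub>R axis i 1)) has_derivative (\<lambda>t. F' (t *\<^sub>R axis i 1))) (at 0)"
    by (rule has_derivative_compose)
  moreover have "F' (t *\<^sub>R axis i 1) = t *\<^sub>R F' (axis i 1)" for t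
    using linear_scale[OF has_derivative_linear[OF assms]] .
  ultimately have "((\<lambda>t. F (y + t *\<^sub>R axis i 1)) has_vector_derivative F' (axis i 1)) (at 0)"
    by (simp add: has_vector_derivative_def)
  then show ?thesis
    unfolding pderiv_coord_def by (rule vector_derivative_at)
qed

lemma has_derivative_locally_constant:
  assumes "open U" "y \<in> U" "(F has_derivative F') (at y)" "\<And>x. x \<in> U \<Longrightarrow> F x = c"
  shows "F' h = 0"
proof -
  have "(F has_derivative (\<lambda>_. 0)) (at y)"
    using has_derivative_transform_within_open[OF has_derivative_const assms(1,2)] assms(4) by metis
  then show ?thesis
    using has_derivative_unique assms(3) by metis
qed

lemma has_derivative_partial_fst:
  assumes "((\<lambda>p. T (fst p) (snd p)) has_derivative D) (at (x, y))"
  shows "((\<lambda>x'. T x' y) has_derivative (\<lambda>w. D (w, 0))) (at x)"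
proof -
  have "((\<lambda>x'. (x', y)) has_derivative (\<lambda>w. (w, 0))) (at x)"
    by (auto intro!: derivative_eq_intros)
  from has_derivative_compose[OF this assms] show ?thesis
    by simp
qed

lemma derivative_symmetric_kernel_skew:
  fixes T :: "'a::real_normed_vector \<Rightarrow> 'a \<Rightarrow> real^'m^'m"
  assumes "open U" "y \<in> U"
    and D: "((\<lambda>p. T (fst p) (snd p)) has_derivative D) (at (y, y))"
    and symmetric: "\<And>x z. x \<in> U \<Longrightarrow> z \<in> U \<Longrightarrow> T z x = transpose (T x z)"
    and diagonal: "\<And>x. x \<in> U \<Longrightarrow> T x x = c"
  shows "transpose (D (v, 0)) = - D (v, 0)"
proof -
  have "((\<lambda>x. (y, x)) has_derivative (\<lambda>w. (0, w))) (at y)"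
    by (auto intro!: derivative_eq_intros)
  from has_derivative_compose[OF this D]
  have snd: "((\<lambda>x. T y x) has_derivative (\<lambda>w. D (0, w))) (at y)"
    by simp
  have "((\<lambda>x. transpose (T x y)) has_derivative (\<lambda>w. transpose (D (w, 0)))) (at y)"
    using bounded_linear.has_derivative[OF bounded_linear_transpose has_derivative_partial_fst[OF D]] .
  moreover have "transpose (T x y) = T y x" if "x \<in> U" for x
    using symmetric[OF that \<open>y \<in> U\<close>] by (rule sym)
  ultimately have "((\<lambda>x. T y x) has_derivative (\<lambda>w. transpose (D (w, 0)))) (at y)"
    using has_derivative_transform_within_open[OF _ \<open>open U\<close> \<open>y \<in> U\<close>] by blast
  then have "(\<lambda>w. D (0, w)) = (\<lambda>w. transpose (D (w, 0)))"
    by (rule has_derivative_unique[OF snd])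
  then have "D (0, v) = transpose (D (v, 0))"
    by (rule fun_cong)
  have "((\<lambda>x. (x, x)) has_derivative (\<lambda>w. (w, w))) (at y)"
    by (auto intro!: derivative_eq_intros)
  from has_derivative_compose[OF this D]
  have "((\<lambda>x. T x x) has_derivative (\<lambda>w. D (w, w))) (at y)"
    by simp
  then have "D (v, v) = 0"
    by (rule has_derivative_locally_constant[OF \<open>open U\<close> \<open>y \<in> U\<close> _ diagonal])
  have "D (v, 0) + transpose (D (v, 0)) = D (v, 0) + D (0, v)"
    by (simp only: \<open>D (0, v) = transpose (D (v, 0))\<close>)
  also have "\<dots> = D ((v, 0) + (0, v))"
    by (rule linear_add[OF has_derivative_linear[OF D], symmetric])
  also have "\<dots> = 0"
    using \<open>D (v, v) = 0\<close> by simp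
  finally show ?thesis
    unfolding add_eq_0_iff .
qed

lemma pderiv_coord_orthogonal_conjugate:
  fixes F G g :: "real^'n \<Rightarrow> real^'m^'m"
  assumes "open U" "y \<in> U" "F differentiable (at y)" "g differentiable (at y)"
    and G: "\<And>x. x \<in> U \<Longrightarrow> G x = transpose (g x) ** F x ** g y"
    and "F y = mat 1"
    and orthogonal: "\<And>x. x \<in> U \<Longrightarrow> transpose (g x) ** g x = mat 1"
  shows "pderiv_coord i G y
    = transpose (g y) ** pderiv_coord i F y ** g y - transpose (g y) ** pderiv_coord i g y"
proof -
  obtain DF Dg where DF: "(F has_derivative DF) (at y)" and Dg: "(g has_derivative Dg) (at y)"
    using assms(3,4) unfolding differentiable_def by blast
  define v :: "real^'n" where "v = axis i 1"
  have Dg_transpose: "((\<lambda>x. transpose (g x)) has_derivative (\<lambda>w. transpose (Dg w))) (at y)"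
    using bounded_linear.has_derivative[OF bounded_linear_transpose Dg] .
  have "((\<lambda>x. transpose (g x) ** F x ** g y) has_derivative
      (\<lambda>w. (transpose (g y) ** DF w + transpose (Dg w) ** F y) ** g y)) (at y)"
    using matrix_mult.FDERIV[OF matrix_mult.FDERIV[OF Dg_transpose DF] has_derivative_const] by simp
  then have DG: "(G has_derivative (\<lambda>w. (transpose (g y) ** DF w + transpose (Dg w) ** F y) ** g y)) (at y)"
    by (rule has_derivative_transform_within_open[OF _ \<open>open U\<close> \<open>y \<in> U\<close>]) (simp add: G)
  have "transpose (g y) ** Dg v + transpose (Dg v) ** g y = 0"
    by (rule has_derivative_locally_constant[OF \<open>open U\<close> \<open>y \<in> U\<close>
          matrix_mult.FDERIV[OF Dg_transpose Dg] orthogonal])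
  then have "transpose (Dg v) ** g y = - (transpose (g y) ** Dg v)"
    by (simp add: add_eq_0_iff)
  have "pderiv_coord i G y = (transpose (g y) ** DF v + transpose (Dg v) ** F y) ** g y"
    unfolding v_def by (rule pderiv_coord_at[OF DG])
  also have "\<dots> = transpose (g y) ** DF v ** g y + transpose (Dg v) ** g y"
    using \<open>F y = mat 1\<close> by (simp add: matrix_mult.add_left)
  also have "\<dots> = transpose (g y) ** DF v ** g y - transpose (g y) ** Dg v"
    using \<open>transpose (Dg v) ** g y = - (transpose (g y) ** Dg v)\<close> by simp
  finally show ?thesis
    unfolding v_def pderiv_coord_at[OF DF] pderiv_coord_at[OF Dg] .
qed

lemma pderiv_coord_inner_skew:
  fixes s t :: "real^'n \<Rightarrow> real^'m" and \<Gamma> :: "real^'m^'m"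
  assumes "s differentiable (at y)" "t differentiable (at y)" "transpose \<Gamma> = - \<Gamma>"
  shows "pderiv_coord i (\<lambda>x. s x \<bullet> t x) y
    = (pderiv_coord i s y + \<Gamma> *v s y) \<bullet> t y + s y \<bullet> (pderiv_coord i t y + \<Gamma> *v t y)"
proof -
  obtain Ds Dt where Ds: "(s has_derivative Ds) (at y)" and Dt: "(t has_derivative Dt) (at y)"
    using assms(1,2) unfolding differentiable_def by blast
  have neg: "(- \<Gamma>) *v w = - (\<Gamma> *v w)" for w :: "real^'m"
    by (simp add: vec_eq_iff matrix_vector_mult_def sum_negf)
  have "(\<Gamma> *v s y) \<bullet> t y = s y \<bullet> (transpose \<Gamma> *v t y)"
    using dot_lmul_matrix[of "s y" "transpose \<Gamma>" "t y"] by simp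
  also have "\<dots> = - (s y \<bullet> (\<Gamma> *v t y))"
    unfolding assms(3) neg by (rule inner_minus_right)
  finally have "(\<Gamma> *v s y) \<bullet> t y + s y \<bullet> (\<Gamma> *v t y) = 0"
    by simp
  then show ?thesis
    using pderiv_coord_at[OF has_derivative_inner[OF Ds Dt]] pderiv_coord_at[OF Ds] pderiv_coord_at[OF Dt]
    by (simp add: inner_add_left inner_add_right inner_commute)
qed

section \<open>The tunneling matrix in an orthonormal frame\<close>

lemma nondegenerate_on_invertible:
  assumes "nondegenerate_on U Cm" "x \<in> U"
  shows "invertible (Cm x x)"
proof -
  have "u = 0" if "Cm x x *v u = 0" for u
    using assms that unfolding nondegenerate_on_def by force
  then show ?thesis
    unfolding invertible_left_inverse matrix_left_invertible_ker by blast
qed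

locale orthonormal_correlator_frame =
  fixes U :: "(real^'n) set"
    and Cm :: "real^'n \<Rightarrow> real^'n \<Rightarrow> real^'r^'r"
    and e :: "real^'n \<Rightarrow> real^'r^'r"
  assumes open_U: "open U"
    and correlator: "correlator_on U Cm"
    and nondegenerate: "nondegenerate_on U Cm"
    and frame: "orthonormal_frame_on U Cm e"
begin

lemma frame_invertible: "x \<in> U \<Longrightarrow> invertible (e x)"
  using frame unfolding orthonormal_frame_on_def by blast

lemma metricC_frame:
  assumes "x \<in> U"
  shows "metricC Cm x ** e x = transpose (matrix_inv (e x))"
proof -
  have "transpose (matrix_inv (e x))
      = transpose (matrix_inv (e x)) ** (transpose (e x) ** metricC Cm x ** e x)"
    using frame assms unfolding orthonormal_frame_on_def by simp
  also have "\<dots> = transpose (e x ** matrix_inv (e x)) ** (metricC Cm x ** e x)"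
    by (simp add: matrix_mul_assoc matrix_transpose_mul)
  also have "\<dots> = metricC Cm x ** e x"
    using matrix_inv_right[OF frame_invertible[OF assms]] by simp
  finally show ?thesis ..
qed

lemma tunneling_frame_eq:
  assumes "y \<in> U"
  shows "tunneling_frame Cm e x y = matrix_inv (e x) ** Cm x y ** transpose (matrix_inv (e y))"
  unfolding tunneling_frame_def tunneling_def
  using metricC_frame[OF assms] by (simp add: matrix_mul_assoc[symmetric])

lemma tunneling_frame_diagonal:
  assumes "x \<in> U"
  shows "tunneling_frame Cm e x x = mat 1"
proof -
  have "tunneling_frame Cm e x x = matrix_inv (e x) ** (Cm x x ** metricC Cm x) ** e x"
    unfolding tunneling_frame_def tunneling_def by (simp add: matrix_mul_assoc)
  also have "\<dots> = mat 1"
    using matrix_inv_right[OF nondegenerate_on_invertible[OF nondegenerate assms]]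
      matrix_inv_left[OF frame_invertible[OF assms]]
    by (simp add: metricC_def)
  finally show ?thesis .
qed

lemma tunneling_frame_symmetric:
  assumes "x \<in> U" "y \<in> U"
  shows "tunneling_frame Cm e y x = transpose (tunneling_frame Cm e x y)"
proof -
  have "Cm y x = transpose (Cm x y)"
    using correlator assms unfolding correlator_on_def by blast
  then show ?thesis
    using assms by (simp add: tunneling_frame_eq matrix_transpose_mul matrix_mul_assoc)
qed

lemma tunneling_frame_differentiable:
  assumes "x \<in> U" "y \<in> U"
  shows "(\<lambda>p. tunneling_frame Cm e (fst p) (snd p)) differentiable (at (x, y))"
proof -
  have coframe: "(\<lambda>z. matrix_inv (e z)) differentiable (at z)" if "z \<in> U" for z
  proof -
    have "e differentiable (at z)"
      using frame that smooth_on_imp_differentiable[OF open_U]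
      unfolding orthonormal_frame_on_def by blast
    then have "(matrix_inv \<circ> e) differentiable (at z)"
      by (rule differentiable_chain_at[of e z matrix_inv,
            OF _ differentiable_matrix_inv[OF frame_invertible[OF that]]])
    then show ?thesis
      by (simp add: o_def)
  qed
  have "((\<lambda>z. matrix_inv (e z)) \<circ> fst) differentiable (at (x, y))"
    by (rule differentiable_chain_at[OF bounded_linear_imp_differentiable[OF bounded_linear_fst]])
       (simp add: coframe assms)
  moreover have "((transpose \<circ> (\<lambda>z. matrix_inv (e z))) \<circ> snd) differentiable (at (x, y))"
    by (rule differentiable_chain_at[OF bounded_linear_imp_differentiable[OF bounded_linear_snd]]
        differentiable_chain_at[OF _ bounded_linear_imp_differentiable[OF bounded_linear_transpose]])+
       (simp add: coframe assms)
  moreover have "(\<lambda>p. Cm (fst p) (snd p)) differentiable (at (x, y))"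
    using correlator assms smooth_on_imp_differentiable[OF open_Times[OF open_U open_U]]
    unfolding correlator_on_def case_prod_unfold by blast
  ultimately have "(\<lambda>p. matrix_inv (e (fst p)) ** Cm (fst p) (snd p)
      ** transpose (matrix_inv (e (snd p)))) differentiable (at (x, y))"
    unfolding o_def by (intro differentiable_matrix_mult)
  then obtain D where D: "((\<lambda>p. matrix_inv (e (fst p)) ** Cm (fst p) (snd p)
      ** transpose (matrix_inv (e (snd p)))) has_derivative D) (at (x, y))"
    unfolding differentiable_def by blast
  have "((\<lambda>p. tunneling_frame Cm e (fst p) (snd p)) has_derivative D) (at (x, y))"
    by (rule has_derivative_transform_within_open[OF D open_Times[OF open_U open_U]])
       (use assms in \<open>auto simp: tunneling_frame_eq\<close>)
  then show ?thesis
    by (rule differentiableI)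
qed

lemma Gamma_skew:
  assumes "y \<in> U"
  shows "transpose (Gamma Cm e i y) = - Gamma Cm e i y"
proof -
  obtain D where D: "((\<lambda>p. tunneling_frame Cm e (fst p) (snd p)) has_derivative D) (at (y, y))"
    using tunneling_frame_differentiable[OF assms assms] unfolding differentiable_def by blast
  have "Gamma Cm e i y = - D (axis i 1, 0)"
    unfolding Gamma_def using pderiv_coord_at[OF has_derivative_partial_fst[OF D]] by simp
  moreover have "transpose (D (axis i 1, 0)) = - D (axis i 1, 0)"
    using derivative_symmetric_kernel_skew[OF open_U assms D]
      tunneling_frame_symmetric tunneling_frame_diagonal by blast
  ultimately show ?thesis
    by (simp add: linear_neg[OF bounded_linear.linear[OF bounded_linear_transpose]])
qed

lemma Gamma_metric_compatible:
  assumes "smooth_on U s" "smooth_on U t" "y \<in> U"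
  shows "pderiv_coord i (\<lambda>x. s x \<bullet> t x) y
    = (pderiv_coord i s y + Gamma Cm e i y *v s y) \<bullet> t y
      + s y \<bullet> (pderiv_coord i t y + Gamma Cm e i y *v t y)"
  using assms by (intro pderiv_coord_inner_skew Gamma_skew smooth_on_imp_differentiable[OF open_U])

lemma orthonormal_frame_gauge:
  assumes "smooth_on U g" "orthogonal_matrix_valued U g"
  shows "orthonormal_frame_on U Cm (\<lambda>x. e x ** g x)"
  unfolding orthonormal_frame_on_def
proof (intro conjI ballI)
  show "smooth_on U (\<lambda>x. e x ** g x)"
    using frame assms(1) unfolding orthonormal_frame_on_def
    by (blast intro: smooth_on_bilinear[OF bounded_bilinear_matrix_mult open_U])
  fix x
  assume "x \<in> U"
  then have orthogonal: "transpose (g x) ** g x = mat 1"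
    using assms(2) unfolding orthogonal_matrix_valued_def by blast
  show "invertible (e x ** g x)"
    using invertible_mult frame_invertible[OF \<open>x \<in> U\<close>] orthogonal invertible_left_inverse by blast
  have "transpose (e x ** g x) ** metricC Cm x ** (e x ** g x)
      = transpose (g x) ** (transpose (e x) ** metricC Cm x ** e x) ** g x"
    by (simp add: matrix_transpose_mul matrix_mul_assoc)
  then show "transpose (e x ** g x) ** metricC Cm x ** (e x ** g x) = mat 1"
    using frame \<open>x \<in> U\<close> orthogonal unfolding orthonormal_frame_on_def by simp
qed

lemma tunneling_frame_gauge:
  assumes "orthogonal_matrix_valued U g" "x \<in> U"
  shows "tunneling_frame Cm (\<lambda>x. e x ** g x) x y = transpose (g x) ** tunneling_frame Cm e x y ** g y"
proof -
  have "matrix_inv (e x ** g x) = transpose (g x) ** matrix_inv (e x)"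
  proof (rule matrix_inv_unique_left)
    have "(transpose (g x) ** matrix_inv (e x)) ** (e x ** g x)
        = transpose (g x) ** (matrix_inv (e x) ** e x) ** g x"
      by (simp add: matrix_mul_assoc)
    also have "\<dots> = mat 1"
      using assms matrix_inv_left[OF frame_invertible[OF assms(2)]]
      unfolding orthogonal_matrix_valued_def by simp
    finally show "(transpose (g x) ** matrix_inv (e x)) ** (e x ** g x) = mat 1" .
  qed
  then show ?thesis
    unfolding tunneling_frame_def by (simp add: matrix_mul_assoc)
qed

lemma Gamma_gauge:
  assumes "smooth_on U g" "orthogonal_matrix_valued U g" "y \<in> U"
  shows "Gamma Cm (\<lambda>x. e x ** g x) i y
    = matrix_inv (g y) ** pderiv_coord i g y + matrix_inv (g y) ** Gamma Cm e i y ** g y"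
proof -
  have orthogonal: "transpose (g x) ** g x = mat 1" if "x \<in> U" for x
    using assms(2) that unfolding orthogonal_matrix_valued_def by blast
  obtain D where "((\<lambda>p. tunneling_frame Cm e (fst p) (snd p)) has_derivative D) (at (y, y))"
    using tunneling_frame_differentiable[OF assms(3) assms(3)] unfolding differentiable_def by blast
  then have "(\<lambda>x. tunneling_frame Cm e x y) differentiable (at y)"
    using has_derivative_partial_fst differentiableI by blast
  then have "pderiv_coord i (\<lambda>x. tunneling_frame Cm (\<lambda>x. e x ** g x) x y) y
      = transpose (g y) ** pderiv_coord i (\<lambda>x. tunneling_frame Cm e x y) y ** g y
        - transpose (g y) ** pderiv_coord i g y"
    by (rule pderiv_coord_orthogonal_conjugate[OF open_U assms(3) _
          smooth_on_imp_differentiable[OF open_U assms(1,3)]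
          tunneling_frame_gauge[OF assms(2)] tunneling_frame_diagonal[OF assms(3)] orthogonal])
  moreover have "matrix_inv (g y) = transpose (g y)"
    using matrix_inv_unique_left orthogonal[OF assms(3)] by blast
  ultimately show ?thesis
    unfolding Gamma_def by (simp add: matrix_mult.minus_left matrix_mult.minus_right)
qed

end

theorem proposition2p1:
  fixes U :: "(real^'n) set"
    and Cm :: "real^'n \<Rightarrow> real^'n \<Rightarrow> real^'r^'r"
    and e :: "real^'n \<Rightarrow> real^'r^'r"
  assumes "open U"
    and "correlator_on U Cm"
    and "nondegenerate_on U Cm"
    and "orthonormal_frame_on U Cm e"
  shows
    "(\<forall>i. \<forall>y\<in>U. transpose (Gamma Cm e i y) = - Gamma Cm e i y)
     \<and> (\<forall>s t. smooth_on U s \<and> smooth_on U t \<longrightarrow>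
          (\<forall>i. \<forall>y\<in>U. pderiv_coord i (\<lambda>x. s x \<bullet> t x) y =
              (pderiv_coord i s y + Gamma Cm e i y *v s y) \<bullet> t y
              + s y \<bullet> (pderiv_coord i t y + Gamma Cm e i y *v t y)))
     \<and> (\<forall>g. smooth_on U g \<and> orthogonal_matrix_valued U g \<longrightarrow>
          orthonormal_frame_on U Cm (\<lambda>x. e x ** g x) \<and>
          (\<forall>i. \<forall>y\<in>U. Gamma Cm (\<lambda>x. e x ** g x) i y =
              matrix_inv (g y) ** pderiv_coord i g y
              + matrix_inv (g y) ** Gamma Cm e i y ** g y))"
proof -
  interpret orthonormal_correlator_frame U Cm e
    using assms by unfold_locales
  show ?thesis
    by (intro conjI allI ballI impI; (elim conjE)?)
       (simp_all add: Gamma_skew Gamma_metric_compatible orthonormal_frame_gauge Gamma_gauge)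
qed

end
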